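(* Let $\Sigma$ be an $n\times n$ positive definite matrix and $\Omega=\Sigma^{-1}$. Suppose there is $\alpha\neq 0$ such that $\Sigma_{i,n-1}=\alpha\,\Sigma_{i,n}$ for all $i\neq n-1$. Then in the conditional independence structure of $\Sigma$, node $n-1$ is a leaf connected to node $n$; that is, $\Omega_{n-1,i}=0$ for all $i\notin\{n-1,n\}$ and $\Omega_{n-1,n}\neq 0$.
   Context: The conditional independence structure of a positive definite $\Sigma$ is the graph on $\{1,\dots,n\}$ with an edge $\{i,j\}$ ($i\neq j$) iff $(\Sigma^{-1})_{ij}\neq 0$. *)

theory Defs
  imports "Jordan_Normal_Form.Matrix"
begin

definition pos_def_mat :: "nat \<Rightarrow> real mat \<Rightarrow> bool" where
  "pos_def_mat n A \<longleftrightarrow> A \<in> carrier_mat n n \<and> transpose_mat A = A \<and>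
     (\<forall>v \<in> carrier_vec n. v \<noteq> 0\<^sub>v n \<longrightarrow> v \<bullet> (A *\<^sub>v v) > 0)"

end

theory Submission
  imports Defs
begin

text \<open>By symmetry the hypothesis
  says that row \<open>n-1\<close> of \<open>\<Sigma>\<close> minus \<open>\<alpha>\<close> times row \<open>n\<close> is \<open>c e\<^sub>n\<^sub>-\<^sub>1\<close> for some scalar \<open>c\<close>.
  Multiplying on the right by \<open>\<Omega>\<close> turns this into \<open>e\<^sub>n\<^sub>-\<^sub>1 - \<alpha> e\<^sub>n = c\<close> times row \<open>n-1\<close>
  of \<open>\<Omega>\<close>, so \<open>c \<noteq> 0\<close>
  and row \<open>n-1\<close> of \<open>\<Omega>\<close> is supported on \<open>{n-1, n}\<close> with \<open>\<Omega>\<^sub>n\<^sub>-\<^sub>1\<^sub>,\<^sub>n = -\<alpha>/c \<noteq> 0\<close>.\<close>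

lemma symmetric_mat_entry:
  assumes "A \<in> carrier_mat n n" and "transpose_mat A = A" and "i < n" and "j < n"
  shows "A $$ (i, j) = A $$ (j, i)"
  by (metis assms carrier_matD index_transpose_mat(1))

lemma mult_mat_row_combination:
  fixes A B :: "'a :: comm_ring mat"
  assumes "A \<in> carrier_mat n n" and "B \<in> carrier_mat n n"
    and "a < n" and "b < n" and "i < n"
  shows "(A * B) $$ (a, i) - x * (A * B) $$ (b, i)
    = (\<Sum>j<n. (A $$ (a, j) - x * A $$ (b, j)) * B $$ (j, i))"
  using assms
  by (simp add: scalar_prod_def lessThan_atLeast0 sum_distrib_left sum_subtractf algebra_simps)

lemma symmetric_row_combination_off_pivot:
  fixes S :: "'a :: comm_ring mat"
  assumes S: "S \<in> carrier_mat n n" "transpose_mat S = S"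
    and ab: "a < n" "b < n"
    and prop_cols: "\<forall>i<n. i \<noteq> a \<longrightarrow> S $$ (i, a) = x * S $$ (i, b)"
    and "j < n" "j \<noteq> a"
  shows "S $$ (a, j) - x * S $$ (b, j) = 0"
  using prop_cols symmetric_mat_entry[OF S ab(1) \<open>j < n\<close>]
    symmetric_mat_entry[OF S ab(2) \<open>j < n\<close>] \<open>j < n\<close> \<open>j \<noteq> a\<close>
  by auto

lemma inverse_row_of_proportional_columns:
  fixes S W :: "'a :: field mat"
  assumes S: "S \<in> carrier_mat n n" "transpose_mat S = S"
    and W: "W \<in> carrier_mat n n" and inv: "S * W = 1\<^sub>m n"
    and ab: "a < n" "b < n" "a \<noteq> b" and "x \<noteq> 0"
    and prop_cols: "\<forall>i<n. i \<noteq> a \<longrightarrow> S $$ (i, a) = x * S $$ (i, b)"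
  shows "(\<forall>i<n. i \<noteq> a \<and> i \<noteq> b \<longrightarrow> W $$ (a, i) = 0) \<and> W $$ (a, b) \<noteq> 0"
proof -
  define c where "c = S $$ (a, a) - x * S $$ (b, a)"
  have key: "(if i = a then 1 else 0) - x * (if i = b then 1 else 0) = c * W $$ (a, i)"
    if "i < n" for i
  proof -
    have "(if i = a then 1 else 0) - x * (if i = b then 1 else 0)
        = (S * W) $$ (a, i) - x * (S * W) $$ (b, i)"
      using inv ab that by auto
    also have "\<dots> = (\<Sum>j<n. (S $$ (a, j) - x * S $$ (b, j)) * W $$ (j, i))"
      by (rule mult_mat_row_combination[OF S(1) W ab(1,2) that])
    also have "\<dots> = (\<Sum>j<n. if j = a then c * W $$ (a, i) else 0)"
      by (rule sum.cong) (auto simp: symmetric_row_combination_off_pivot[OF S ab(1,2) prop_cols] c_def)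
    also have "\<dots> = c * W $$ (a, i)"
      using ab by simp
    finally show ?thesis .
  qed
  have "c \<noteq> 0"
    using key[OF ab(1)] ab by auto
  have "W $$ (a, i) = 0" if "i < n" "i \<noteq> a" "i \<noteq> b" for i
    using key[OF \<open>i < n\<close>] that \<open>c \<noteq> 0\<close> by simp
  moreover have "W $$ (a, b) \<noteq> 0"
    using key[OF ab(2)] ab \<open>x \<noteq> 0\<close> by auto
  ultimately show ?thesis
    by blast
qed

theorem lemma1:
  fixes n :: nat and Sigma Omega :: "real mat" and alpha :: real
  assumes "n \<ge> 2"
    and "pos_def_mat n Sigma"
    and "Omega \<in> carrier_mat n n"
    and "Sigma * Omega = 1\<^sub>m n" and "Omega * Sigma = 1\<^sub>m n"
    and "alpha \<noteq> 0"
    and "\<forall>i<n. i \<noteq> n - 2 \<longrightarrow> Sigma $$ (i, n - 2) = alpha * Sigma $$ (i, n - 1)"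
  shows "(\<forall>i<n. i \<noteq> n - 2 \<and> i \<noteq> n - 1 \<longrightarrow> Omega $$ (n - 2, i) = 0)
         \<and> Omega $$ (n - 2, n - 1) \<noteq> 0"
proof (rule inverse_row_of_proportional_columns)
  show "Sigma \<in> carrier_mat n n" "transpose_mat Sigma = Sigma"
    using assms(2) unfolding pos_def_mat_def by auto
  show "n - 2 < n" "n - 1 < n" "n - 2 \<noteq> n - 1"
    using assms(1) by auto
qed (use assms in auto)

end
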